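(* For all integers $k\geq 1$, $V(F_{2k+1}-1)=V(F_{2k+1}-2)=F_{2k-1}$ and $V(F_{2k+2}-2)=F_{2k}$.
   Context: Fibonacci numbers: $F_0=0$, $F_1=1$, $F_{m+2}=F_{m+1}+F_m$. Standard Fibonacci words: $f_{-1}=b$, $f_0=a$, $f_{m+1}=f_mf_{m-1}$. The Fibonacci word ${\bf f}=\lim f_m=abaababa\cdots$, with prefix of length $j$ denoted ${\bf f}(0..j]$. $V(N)$ is the number of factorizations of ${\bf f}(0..N]$ as $f_m^{k_m}\cdots f_0^{k_0}$ with all $k_i\geq 0$ (into standard words $f_i$, $i\geq0$, in non-strictly decreasing order of index), counted up to leading zero exponents; $V(0)=1$. *)

theory Defs
  imports "HOL-Number_Theory.Fib"
begin

datatype letter = La | Lb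

text \<open>Standard Fibonacci words: fw n = f_n, with f_{-1} = b, f_0 = a,
  f_1 = f_0 f_{-1} = ab, f_{n+2} = f_{n+1} f_n.\<close>
fun fw :: "nat \<Rightarrow> letter list" where
  "fw 0 = [La]"
| "fw (Suc 0) = [La, Lb]"
| "fw (Suc (Suc n)) = fw (Suc n) @ fw n"

text \<open>The infinite Fibonacci word (limit of the f_n; f_n is a prefix of f_{n+1}
  and length (fw (Suc j)) > j).\<close>
definition fword :: "nat \<Rightarrow> letter" where
  "fword j = fw (Suc j) ! j"

definition fprefix :: "nat \<Rightarrow> letter list" where
  "fprefix N = map fword [0..<N]"

text \<open>The word f_m^{k_m} ... f_0^{k_0} for the exponent list ks = [k_0, ..., k_m].\<close>
definition fact_word :: "nat list \<Rightarrow> letter list" where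
  "fact_word ks = concat (map (\<lambda>i. concat (replicate (ks ! i) (fw i))) (rev [0..<length ks]))"

text \<open>Factorizations counted up to leading zero exponents: normalized exponent
  lists have nonzero last (= leading) exponent; the empty list is the empty product.\<close>
definition V :: "nat \<Rightarrow> nat" where
  "V N = card {ks. (ks = [] \<or> last ks \<noteq> 0) \<and> fact_word ks = fprefix N}"

end

theory Submission
  imports Defs
begin

(*
  Let phi be the Fibonacci morphism a -> ab, b -> a, so that phi f_m = f_(m+1). Splitting off
  the last block gives f_m^k_m ... f_1^k_1 f_0^k_0 = phi (f_(m-1)^k_m ... f_0^k_1) a^k_0. As phi
  is injective and phi x ends in b whenever x ends in a, the factorizations of phi x a^j (for x
  empty or ending in a) are those of x b^(j - k_0) with a last exponent k_0 <= j appended, and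
  no factorization ends in bb. Let c_n be f_n without its last two letters; then
  c_(n+1) = phi c_n a, and the numbers of factorizations of c_n, c_n a and c_n b are F_n, F_n
  and F_(n-1) by the Fibonacci recursion. The prefix of length F_(n+2) - 2 is c_n, and for odd
  n the prefix of length F_(n+2) - 1 is c_n a.
*)

fun fib_morph :: "letter list \<Rightarrow> letter list" where
  "fib_morph [] = []"
| "fib_morph (La # xs) = La # Lb # fib_morph xs"
| "fib_morph (Lb # xs) = La # fib_morph xs"

lemma fib_morph_append [simp]: "fib_morph (xs @ ys) = fib_morph xs @ fib_morph ys"
  by (induction xs rule: fib_morph.induct) auto

lemma fib_morph_concat: "fib_morph (concat xss) = concat (map fib_morph xss)"
  by (induction xss) auto

lemma fib_morph_concat_replicate:
  "fib_morph (concat (replicate n xs)) = concat (replicate n (fib_morph xs))"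
  by (induction n) auto

lemma fib_morph_Nil_iff [simp]: "fib_morph xs = [] \<longleftrightarrow> xs = []"
  by (cases xs rule: fib_morph.cases) auto

lemma fib_morph_ne_Lb_Cons: "fib_morph xs \<noteq> Lb # ys"
  by (cases xs rule: fib_morph.cases) auto

lemma fib_morph_replicate_Lb [simp]: "fib_morph (replicate n Lb) = replicate n La"
  by (induction n) auto

lemma inj_fib_morph: "inj fib_morph"
proof (rule injI)
  show "xs = ys" if "fib_morph xs = fib_morph ys" for xs ys
    using that
  proof (induction xs arbitrary: ys rule: fib_morph.induct)
    case 1
    then show ?case
      by (metis fib_morph.simps(1) fib_morph_Nil_iff)
  next
    case (2 xs)
    then show ?case
      using fib_morph_ne_Lb_Cons by (cases ys rule: fib_morph.cases) (auto dest: sym)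
  next
    case (3 xs)
    then show ?case
      using fib_morph_ne_Lb_Cons by (cases ys rule: fib_morph.cases) auto
  qed
qed

lemma last_fib_morph:
  "xs \<noteq> [] \<Longrightarrow> last (fib_morph xs) = (case last xs of La \<Rightarrow> Lb | Lb \<Rightarrow> La)"
  by (induction xs rule: fib_morph.induct) (auto split: letter.split)

lemma fib_morph_fw: "fib_morph (fw n) = fw (Suc n)"
  by (induction n rule: fw.induct) auto

lemma fib_morph_append_replicate_eq:
  assumes x: "x = [] \<or> last x = La"
    and eq: "fib_morph y @ replicate k La = fib_morph x @ replicate j La"
  shows "k \<le> j \<and> y = x @ replicate (j - k) Lb"
proof -
  have "k \<le> j"
  proof (rule ccontr)
    assume "\<not> k \<le> j"
    then have "replicate k La = replicate (k - j) La @ replicate j La"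
      by (simp flip: replicate_add)
    with eq have "fib_morph x = fib_morph y @ replicate (k - j) La"
      by simp
    with \<open>\<not> k \<le> j\<close> have "fib_morph x \<noteq> [] \<and> last (fib_morph x) = La"
      by simp
    with x show False
      by (auto simp: last_fib_morph)
  qed
  moreover have "fib_morph y = fib_morph (x @ replicate (j - k) Lb)"
  proof -
    from \<open>k \<le> j\<close> have "replicate j La = replicate (j - k) La @ replicate k La"
      by (simp flip: replicate_add)
    with eq show ?thesis
      by simp
  qed
  ultimately show ?thesis
    using injD[OF inj_fib_morph] by blast
qed

lemma fact_word_Cons: "fact_word (k # ks) = fib_morph (fact_word ks) @ replicate k La"
proof -
  let ?pow = "\<lambda>ks i. concat (replicate (ks ! i) (fw i))"
  have "[0..<Suc (length ks)] = 0 # map Suc [0..<length ks]"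
    by (simp add: map_Suc_upt upt_conv_Cons del: upt_Suc)
  then have "fact_word (k # ks)
      = concat (map (?pow (k # ks) \<circ> Suc) (rev [0..<length ks])) @ ?pow (k # ks) 0"
    by (simp add: fact_word_def rev_map del: upt_Suc)
  also have "?pow (k # ks) \<circ> Suc = fib_morph \<circ> ?pow ks"
    by (simp add: fun_eq_iff fib_morph_concat_replicate fib_morph_fw)
  also have "concat (map (fib_morph \<circ> ?pow ks) (rev [0..<length ks]))
      = fib_morph (fact_word ks)"
    by (simp add: fact_word_def fib_morph_concat)
  also have "?pow (k # ks) 0 = replicate k La"
    by (induction k) auto
  finally show ?thesis .
qed

lemma fact_word_ne_Lb_Cons: "fact_word ks \<noteq> Lb # w"
proof (cases ks)
  case (Cons k ks')
  then show ?thesis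
    by (cases "fact_word ks'" rule: fib_morph.cases; cases k) (auto simp: fact_word_Cons)
qed (simp add: fact_word_def)

lemma fact_word_ne_snoc_Lb_Lb: "fact_word ks \<noteq> w @ [Lb, Lb]"
proof (cases ks)
  case (Cons k ks')
  then show ?thesis
  proof (cases k)
    case 0
    have "fib_morph v \<noteq> w @ [Lb, Lb]" for v
    proof (cases v rule: rev_cases)
      case (snoc u c)
      then show ?thesis by (cases c) auto
    qed simp
    with Cons 0 show ?thesis by (simp add: fact_word_Cons)
  next
    case (Suc k')
    with Cons show ?thesis
      by (simp add: fact_word_Cons flip: replicate_append_same)
  qed
qed (simp add: fact_word_def)

definition factorizations :: "letter list \<Rightarrow> nat list set" where
  "factorizations w = {ks. (ks = [] \<or> last ks \<noteq> 0) \<and> fact_word ks = w}"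

lemma V_eq_card_factorizations: "V N = card (factorizations (fprefix N))"
  by (simp add: V_def factorizations_def)

lemma factorizations_Nil: "factorizations [] = {[]}"
proof -
  have "ks = []" if "ks = [] \<or> last ks \<noteq> 0" "fact_word ks = []" for ks
    using that
  proof (induction ks)
    case (Cons k ks)
    then show ?case
      by (cases ks) (auto simp: fact_word_Cons)
  qed simp
  then show ?thesis
    by (auto simp: factorizations_def fact_word_def)
qed

lemma factorizations_Lb: "factorizations [Lb] = {}"
  using fact_word_ne_Lb_Cons by (auto simp: factorizations_def)

lemma factorizations_snoc_Lb_Lb: "factorizations (w @ [Lb, Lb]) = {}"
  using fact_word_ne_snoc_Lb_Lb by (auto simp: factorizations_def)

lemma Cons_in_factorizations_iff:
  "k # ks \<in> factorizations w \<longleftrightarrow> (ks = [] \<longrightarrow> k \<noteq> 0) \<and> (ks = [] \<or> last ks \<noteq> 0) \<and>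
     fib_morph (fact_word ks) @ replicate k La = w"
  by (auto simp: factorizations_def fact_word_Cons)

lemma Cons_in_factorizations_fib_morph_iff:
  assumes x: "x = [] \<or> last x = La" and nonempty: "x \<noteq> [] \<or> j \<noteq> 0"
  shows "k # ks \<in> factorizations (fib_morph x @ replicate j La) \<longleftrightarrow>
    k \<le> j \<and> ks \<in> factorizations (x @ replicate (j - k) Lb)"
proof
  assume "k # ks \<in> factorizations (fib_morph x @ replicate j La)"
  then have normal: "ks = [] \<or> last ks \<noteq> 0"
    and eq: "fib_morph (fact_word ks) @ replicate k La = fib_morph x @ replicate j La"
    by (simp_all add: Cons_in_factorizations_iff)
  with fib_morph_append_replicate_eq[OF x eq]
  show "k \<le> j \<and> ks \<in> factorizations (x @ replicate (j - k) Lb)"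
    by (simp add: factorizations_def)
next
  assume "k \<le> j \<and> ks \<in> factorizations (x @ replicate (j - k) Lb)"
  then have "k \<le> j" and normal: "ks = [] \<or> last ks \<noteq> 0"
    and word: "fact_word ks = x @ replicate (j - k) Lb"
    by (simp_all add: factorizations_def)
  from word \<open>k \<le> j\<close>
  have "fib_morph (fact_word ks) @ replicate k La = fib_morph x @ replicate j La"
    by (simp flip: replicate_add)
  moreover from word nonempty \<open>k \<le> j\<close> have "ks = [] \<longrightarrow> k \<noteq> 0"
    by (auto simp: fact_word_def)
  ultimately show "k # ks \<in> factorizations (fib_morph x @ replicate j La)"
    using normal by (simp add: Cons_in_factorizations_iff)
qed

lemma Nil_notin_factorizations: "w \<noteq> [] \<Longrightarrow> [] \<notin> factorizations w"
  by (simp add: factorizations_def fact_word_def)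

lemma factorizations_fib_morph_snoc_La:
  assumes "x = [] \<or> last x = La"
  shows "factorizations (fib_morph x @ [La]) =
    Cons 0 ` factorizations (x @ [Lb]) \<union> Cons 1 ` factorizations x"
proof (rule set_eqI)
  fix ks
  show "ks \<in> factorizations (fib_morph x @ [La]) \<longleftrightarrow>
    ks \<in> Cons 0 ` factorizations (x @ [Lb]) \<union> Cons 1 ` factorizations x"
    using Cons_in_factorizations_fib_morph_iff[OF assms, of 1] Nil_notin_factorizations
    by (cases ks) (auto simp: le_Suc_eq)
qed

lemma factorizations_fib_morph_snoc_La_La:
  assumes "x = [] \<or> last x = La"
  shows "factorizations (fib_morph x @ [La, La]) =
    Cons 1 ` factorizations (x @ [Lb]) \<union> Cons 2 ` factorizations x"
proof (rule set_eqI)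
  fix ks
  show "ks \<in> factorizations (fib_morph x @ [La, La]) \<longleftrightarrow>
    ks \<in> Cons 1 ` factorizations (x @ [Lb]) \<union> Cons 2 ` factorizations x"
    using Cons_in_factorizations_fib_morph_iff[OF assms, of 2] Nil_notin_factorizations
      factorizations_snoc_Lb_Lb
    by (cases ks) (auto simp: le_Suc_eq numeral_2_eq_2)
qed

lemma factorizations_fib_morph_snoc:
  "factorizations (fib_morph (x @ [La])) = Cons 0 ` factorizations (x @ [La])"
proof (rule set_eqI)
  fix ks
  show "ks \<in> factorizations (fib_morph (x @ [La])) \<longleftrightarrow>
    ks \<in> Cons 0 ` factorizations (x @ [La])"
    using Cons_in_factorizations_fib_morph_iff[of "x @ [La]" 0] Nil_notin_factorizations
    by (cases ks) auto
qed

lemma card_Cons_image_Un: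
  assumes "finite A" "finite B" "a \<noteq> b"
  shows "card (Cons a ` A \<union> Cons b ` B) = card A + card B"
proof -
  have "card (Cons a ` A \<union> Cons b ` B) = card (Cons a ` A) + card (Cons b ` B)"
    using assms by (intro card_Un_disjoint) auto
  then show ?thesis
    by (simp add: card_image)
qed

(* f_n with its last two letters removed (for n > 0); these are the central words. *)
fun central_fw :: "nat \<Rightarrow> letter list" where
  "central_fw 0 = []"
| "central_fw (Suc 0) = []"
| "central_fw (Suc (Suc n)) = fib_morph (central_fw (Suc n)) @ [La]"

lemma central_fw_Suc: "n > 0 \<Longrightarrow> central_fw (Suc n) = fib_morph (central_fw n) @ [La]"
  by (cases n) auto

lemma central_fw_Nil_or_last: "central_fw n = [] \<or> last (central_fw n) = La"
  by (cases n rule: central_fw.cases) auto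

lemma card_factorizations_central_fw:
  assumes "n > 0"
  shows "finite (factorizations (central_fw n)) \<and> card (factorizations (central_fw n)) = fib n \<and>
    finite (factorizations (central_fw n @ [La])) \<and>
    card (factorizations (central_fw n @ [La])) = fib n \<and>
    finite (factorizations (central_fw n @ [Lb])) \<and>
    card (factorizations (central_fw n @ [Lb])) = fib (n - 1)"
  using assms
proof (induction n rule: nat_induct_non_zero)
  case 1
  have "factorizations [La] = {[1]}"
    using factorizations_fib_morph_snoc_La[of "[]"]
    by (simp add: factorizations_Nil factorizations_Lb)
  then show ?case
    by (simp add: factorizations_Nil factorizations_Lb)
next
  case (Suc n)
  let ?c = "central_fw n"
  have "central_fw (Suc n) = fib_morph ?c @ [La]"
    using Suc.hyps by (rule central_fw_Suc)
  then have c: "factorizations (central_fw (Suc n)) =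
      Cons 0 ` factorizations (?c @ [Lb]) \<union> Cons 1 ` factorizations ?c"
    and ca: "factorizations (central_fw (Suc n) @ [La]) =
      Cons 1 ` factorizations (?c @ [Lb]) \<union> Cons 2 ` factorizations ?c"
    and cb: "factorizations (central_fw (Suc n) @ [Lb]) = Cons 0 ` factorizations (?c @ [La])"
    using factorizations_fib_morph_snoc_La[OF central_fw_Nil_or_last]
      factorizations_fib_morph_snoc_La_La[OF central_fw_Nil_or_last]
      factorizations_fib_morph_snoc[of ?c]
    by simp_all
  from Suc.hyps obtain m where "n = Suc m"
    using gr0_implies_Suc by blast
  then have "fib (Suc n) = fib (n - 1) + fib n"
    by simp
  with Suc.IH show ?case
    by (simp add: c ca cb card_Cons_image_Un card_image)
qed

lemma length_fw: "length (fw n) = fib (n + 2)"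
  by (induction n rule: fw.induct) (auto simp: numeral_2_eq_2)

lemma fw_prefix: "m \<le> n \<Longrightarrow> \<exists>z. fw n = fw m @ z"
proof (induction n rule: dec_induct)
  case (step n)
  then show ?case
    by (cases n) auto
qed simp

lemma less_length_fw: "n < length (fw n)"
  by (induction n rule: fw.induct) auto

lemma fword_eq_nth_fw:
  assumes "j < length (fw n)"
  shows "fword j = fw n ! j"
proof (cases "Suc j \<le> n")
  case True
  then obtain z where "fw n = fw (Suc j) @ z"
    using fw_prefix by blast
  then show ?thesis
    using less_length_fw[of "Suc j"] by (simp add: fword_def nth_append)
next
  case False
  then obtain z where "fw (Suc j) = fw n @ z"
    using fw_prefix[of n "Suc j"] by auto
  then show ?thesis
    using assms by (simp add: fword_def nth_append)
qed

lemma fprefix_eq_take_fw: "N \<le> length (fw n) \<Longrightarrow> fprefix N = take N (fw n)"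
  unfolding fprefix_def by (intro nth_equalityI) (auto simp: fword_eq_nth_fw)

lemma fw_eq_central_fw_append:
  "n > 0 \<Longrightarrow> fw n = central_fw n @ (if odd n then [La, Lb] else [Lb, La])"
proof (induction n rule: nat_induct_non_zero)
  case (Suc n)
  have "fw (Suc n) = fib_morph (fw n)"
    by (simp add: fib_morph_fw)
  with Suc show ?case
    by (auto simp: central_fw_Suc)
qed simp

lemma fprefix_central_fw:
  assumes "n > 0"
  shows "fprefix (fib (n + 2) - 2) = central_fw n"
proof -
  have fw: "fw n = central_fw n @ (if odd n then [La, Lb] else [Lb, La])"
    using assms by (rule fw_eq_central_fw_append)
  then have "fib (n + 2) - 2 = length (central_fw n)"
    using length_fw[of n] by (cases "odd n") simp_all
  then show ?thesis
    using fprefix_eq_take_fw[of _ n] fw by simp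
qed

lemma fprefix_central_fw_La:
  assumes "odd n"
  shows "fprefix (fib (n + 2) - 1) = central_fw n @ [La]"
proof -
  have fw: "fw n = central_fw n @ [La, Lb]"
    using assms fw_eq_central_fw_append[of n] by (simp add: odd_pos)
  then have "fib (n + 2) - 1 = length (central_fw n) + 1"
    using length_fw[of n] by simp
  then show ?thesis
    using fprefix_eq_take_fw[of _ n] fw by simp
qed

lemma V_fib_minus_2:
  assumes "n > 0"
  shows "V (fib (n + 2) - 2) = fib n"
  unfolding V_eq_card_factorizations fprefix_central_fw[OF assms]
  using card_factorizations_central_fw[OF assms] by blast

lemma V_fib_minus_1:
  assumes "odd n"
  shows "V (fib (n + 2) - 1) = fib n"
  unfolding V_eq_card_factorizations fprefix_central_fw_La[OF assms]
  using card_factorizations_central_fw[OF odd_pos[OF assms]] by blast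

theorem corollary1:
  fixes k :: nat
  assumes "k \<ge> 1"
  shows "V (fib (2*k+1) - 1) = fib (2*k-1) \<and> V (fib (2*k+1) - 2) = fib (2*k-1)
         \<and> V (fib (2*k+2) - 2) = fib (2*k)"
proof -
  have "odd (2 * k - 1)" and "2 * k - 1 + 2 = 2 * k + 1"
    using assms by auto
  then show ?thesis
    using V_fib_minus_1[of "2 * k - 1"] V_fib_minus_2[of "2 * k - 1"] V_fib_minus_2[of "2 * k"]
      assms by simp
qed

end
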